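(* Let $b\ge0$, $c\ge0$, $1\le a\le c+1$, and $f\in\mathbb{F}_q[x_1,\dots,x_c]$. Then $\delta_{a;b}(f)$ is a polynomial if and only if for all $c_1,\dots,c_{a-1}\in\mathbb{F}_q$ the following identity of polynomials holds, with $y=\sum_{j=1}^{a-1}c_jx_j$: $$\sum_{i=1}^{a-1}c_i\,x_i^{q^b}\,f(x_1,\dots,x_{i-1},x_{i+1},\dots,x_{a-1},y,x_{a+1},\dots,x_{c+1})=\Big(\sum_{j=1}^{a-1}c_jx_j^{q^b}\Big)f(x_1,\dots,x_{a-1},x_{a+1},\dots,x_{c+1}).$$
   Context: $q$ is a power of a prime. Delta operators: for integers $b\ge0$, $c\ge0$, $1\le a\le c+1$, $\delta_{a;b}:\mathbb{F}_q(x_1,\dots,x_c)\to\mathbb{F}_q(x_1,\dots,x_{c+1})$ sends $f$ to $N/L(x_1,\dots,x_a)$, where $N$ is the $a\times a$ determinant whose $t$-th row is $(x_1^{q^{t-1}},\dots,x_a^{q^{t-1}})$ for $t=1,\dots,a-1$ and whose last row is $(x_1^{q^b}f(\hat x_1),\dots,x_a^{q^b}f(\hat x_a))$, with $f(\hat x_i)=f(x_1,\dots,x_{i-1},x_{i+1},\dots,x_{c+1})$, and $L(x_1,\dots,x_a)=\det(x_j^{q^{t-1}})_{1\le t,j\le a}$. *)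

theory Defs
  imports "HOL-Library.Poly_Mapping" "Jordan_Normal_Form.Determinant"
begin

text \<open>Multivariate polynomials over 'a in the variables x_0, x_1, x_2, ...
  (we only use x_1, x_2, ...): monomials are finitely supported exponent
  vectors nat \<Rightarrow>0 nat, polynomials are finitely supported coefficient maps.\<close>
type_synonym 'a mpoly = "(nat \<Rightarrow>\<^sub>0 nat) \<Rightarrow>\<^sub>0 'a"

definition Var :: "nat \<Rightarrow> ('a::comm_ring_1) mpoly" where
  "Var i = Poly_Mapping.single (Poly_Mapping.single i 1) 1"

definition Const :: "('a::comm_ring_1) \<Rightarrow> 'a mpoly" where
  "Const c = Poly_Mapping.single 0 c"

definition mvars :: "('a::zero) mpoly \<Rightarrow> nat set" where
  "mvars p = \<Union> (Poly_Mapping.keys ` Poly_Mapping.keys p)"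

definition subst :: "(nat \<Rightarrow> ('a::comm_ring_1) mpoly) \<Rightarrow> 'a mpoly \<Rightarrow> 'a mpoly" where
  "subst s p = (\<Sum>m\<in>Poly_Mapping.keys p.
      Const (Poly_Mapping.lookup p m) *
      (\<Prod>v\<in>Poly_Mapping.keys m. s v ^ Poly_Mapping.lookup m v))"

text \<open>f(\<hat>x_i) = f(x_1,...,x_{i-1},x_{i+1},...,x_{c+1}) for f in the variables x_1..x_c.\<close>
definition omit :: "nat \<Rightarrow> ('a::comm_ring_1) mpoly \<Rightarrow> 'a mpoly" where
  "omit i f = subst (\<lambda>k. if k < i then Var k else Var (k + 1)) f"

text \<open>Moore determinant L(x_1,...,x_a) = det (x_j^(q^(t-1)))_{1\<le>t,j\<le>a}.\<close>
definition mooreL :: "nat \<Rightarrow> nat \<Rightarrow> ('a::comm_ring_1) mpoly" where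
  "mooreL q a = det (mat a a (\<lambda>(t, j). Var (j + 1) ^ (q ^ t)))"

text \<open>Numerator N of delta_{a;b}(f): rows t = 1..a-1 are (x_j^(q^(t-1)))_j,
  last row is (x_j^(q^b) f(\<hat>x_j))_j.\<close>
definition deltaN :: "nat \<Rightarrow> nat \<Rightarrow> nat \<Rightarrow> ('a::comm_ring_1) mpoly \<Rightarrow> 'a mpoly" where
  "deltaN q a b f = det (mat a a (\<lambda>(t, j).
      if t + 1 < a then Var (j + 1) ^ (q ^ t)
      else Var (j + 1) ^ (q ^ b) * omit (j + 1) f))"

text \<open>delta_{a;b}(f) = N / L is a polynomial, i.e. L divides N in the
  polynomial ring (L is a nonzero polynomial).\<close>
definition delta_is_poly :: "nat \<Rightarrow> nat \<Rightarrow> nat \<Rightarrow> ('a::comm_ring_1) mpoly \<Rightarrow> bool" where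
  "delta_is_poly q a b f \<longleftrightarrow> mooreL q a dvd deltaN q a b f"

end

(* Let V_i be the F_q-span of x_1, ..., x_(i-1) and L_i = L(x_1, ..., x_i).  Since t |-> t^(q^k)
   is F_q-linear, L_i vanishes at x_i = w for all w in V_i; as a polynomial in x_i it has degree
   q^(i-1) = |V_i| and leading coefficient L_(i-1), hence L_i = L_(i-1) * prod_(w in V_i) (x_i - w).

   Substituting x_i := w = sum_j c_j x_j into the numerator N and subtracting c_j times column j
   from column i leaves a single entry in column i: the difference D_i(c) of the two sides of the
   identity with a replaced by i.  So N(x_i := w) = D_i(c) * cofactor, and for i = a the cofactor
   is L_(a-1) <> 0; as x_a - w divides L_a, L_a | N forces D_a = 0.  Conversely, D_a = 0 for
   c = e_m says that f is invariant under a cyclic shift of its variables, which turns the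
   identities for a into those for every i <= a; then N vanishes on x_i = w for all w in V_i,
   and L_a | N follows by induction on i. *)

theory Submission
  imports Defs "HOL-Library.Cardinality"
begin

section \<open>Substitution into multivariate polynomials\<close>

lemma poly_mapping_sum_single:
  assumes "finite S" "Poly_Mapping.keys p \<subseteq> S"
  shows "(\<Sum>m\<in>S. Poly_Mapping.single m (Poly_Mapping.lookup p m)) = p"
proof (rule poly_mapping_eqI)
  fix k
  have "Poly_Mapping.lookup (\<Sum>m\<in>S. Poly_Mapping.single m (Poly_Mapping.lookup p m)) k
      = (\<Sum>m\<in>S. if m = k then Poly_Mapping.lookup p m else 0)"
    unfolding lookup_sum lookup_single by (intro sum.cong) (auto simp: when_def)
  also have "\<dots> = Poly_Mapping.lookup p k"
    using assms by (auto simp: in_keys_iff)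
  finally show "Poly_Mapping.lookup (\<Sum>m\<in>S. Poly_Mapping.single m (Poly_Mapping.lookup p m)) k
      = Poly_Mapping.lookup p k" .
qed

definition eval_monom :: "(nat \<Rightarrow> 'b::comm_ring_1) \<Rightarrow> (nat \<Rightarrow>\<^sub>0 nat) \<Rightarrow> 'b" where
  "eval_monom s m = (\<Prod>v\<in>Poly_Mapping.keys m. s v ^ Poly_Mapping.lookup m v)"

lemma eval_monom_superset:
  assumes "finite S" "Poly_Mapping.keys m \<subseteq> S"
  shows "eval_monom s m = (\<Prod>v\<in>S. s v ^ Poly_Mapping.lookup m v)"
  unfolding eval_monom_def using assms
  by (intro prod.mono_neutral_left) (auto simp: in_keys_iff)

lemma eval_monom_0 [simp]: "eval_monom s 0 = 1"
  by (simp add: eval_monom_def)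

lemma eval_monom_add: "eval_monom s (m + n) = eval_monom s m * eval_monom s n"
proof -
  let ?S = "Poly_Mapping.keys m \<union> Poly_Mapping.keys n"
  have "eval_monom s (m + n) = (\<Prod>v\<in>?S. s v ^ Poly_Mapping.lookup (m + n) v)"
    using keys_add[of m n] by (intro eval_monom_superset) auto
  also have "\<dots> = (\<Prod>v\<in>?S. s v ^ Poly_Mapping.lookup m v) * (\<Prod>v\<in>?S. s v ^ Poly_Mapping.lookup n v)"
    by (simp add: lookup_add power_add prod.distrib)
  also have "\<dots> = eval_monom s m * eval_monom s n"
    by (simp add: eval_monom_superset[where S = ?S])
  finally show ?thesis .
qed

interpretation Const: comm_ring_hom Const
  by unfold_locales (simp_all add: Const_def single_add mult_single)

lemma subst_eq_sum_superset:
  assumes "finite S" "Poly_Mapping.keys p \<subseteq> S"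
  shows "subst s p = (\<Sum>m\<in>S. Const (Poly_Mapping.lookup p m) * eval_monom s m)"
  unfolding subst_def eval_monom_def[symmetric] using assms
  by (intro sum.mono_neutral_left) (auto simp: in_keys_iff)

lemma subst_single: "subst s (Poly_Mapping.single m c) = Const c * eval_monom s m"
  by (cases "c = 0") (simp_all add: subst_def eval_monom_def)

lemma subst_add: "subst s (p + q) = subst s p + subst s q"
proof -
  let ?S = "Poly_Mapping.keys p \<union> Poly_Mapping.keys q"
  have "subst s (p + q) = (\<Sum>m\<in>?S. Const (Poly_Mapping.lookup (p + q) m) * eval_monom s m)"
    using keys_add[of p q] by (intro subst_eq_sum_superset) auto
  also have "\<dots> = subst s p + subst s q"
    by (simp add: lookup_add Const.hom_add distrib_right sum.distrib subst_eq_sum_superset[where S = ?S])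
  finally show ?thesis .
qed

lemma subst_0 [simp]: "subst s 0 = 0"
  by (simp add: subst_def)

lemma subst_sum: "subst s (sum f A) = (\<Sum>x\<in>A. subst s (f x))"
  by (induction A rule: infinite_finite_induct) (simp_all add: subst_add)

lemma subst_mult: "subst s (p * q) = subst s p * subst s q"
proof -
  let ?mon = "\<lambda>p m. Poly_Mapping.single m (Poly_Mapping.lookup p m)"
  have "p * q = (\<Sum>m\<in>Poly_Mapping.keys p. ?mon p m) * (\<Sum>n\<in>Poly_Mapping.keys q. ?mon q n)"
    by (simp add: poly_mapping_sum_single)
  also have "\<dots> = (\<Sum>m\<in>Poly_Mapping.keys p. \<Sum>n\<in>Poly_Mapping.keys q.
      Poly_Mapping.single (m + n) (Poly_Mapping.lookup p m * Poly_Mapping.lookup q n))"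
    by (simp add: sum_product mult_single)
  finally have "subst s (p * q) = (\<Sum>m\<in>Poly_Mapping.keys p. \<Sum>n\<in>Poly_Mapping.keys q.
      Const (Poly_Mapping.lookup p m) * eval_monom s m * (Const (Poly_Mapping.lookup q n) * eval_monom s n))"
    by (simp add: subst_sum subst_single eval_monom_add Const.hom_mult mult_ac)
  also have "\<dots> = subst s p * subst s q"
    by (simp add: subst_def eval_monom_def sum_product)
  finally show ?thesis .
qed

interpretation subst: comm_ring_hom "subst s"
proof
  show "subst s 1 = 1"
    using subst_single[of s 0 1] by simp
qed (simp_all add: subst_add subst_mult)

lemma subst_Var [simp]: "subst s (Var i) = s i"
  by (simp add: Var_def subst_single eval_monom_def)

lemma subst_Const [simp]: "subst s (Const c) = Const c"
  by (simp add: Const_def subst_single)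

lemma Var_neq_0 [simp]: "Var i \<noteq> 0"
  by (metis Var_def lookup_single_eq lookup_zero one_neq_zero)

lemma subst_Var_id [simp]: "subst Var p = p"
proof -
  have Var_power: "Var v ^ n = Poly_Mapping.single (Poly_Mapping.single v n) 1" for v n
    by (induction n) (simp_all add: Var_def mult_single flip: single_add)
  have prod_single: "(\<Prod>v\<in>S. Poly_Mapping.single (g v) 1) = Poly_Mapping.single (sum g S) (1::'a)"
    for S and g :: "nat \<Rightarrow> nat \<Rightarrow>\<^sub>0 nat"
    by (induction S rule: infinite_finite_induct) (simp_all add: mult_single)
  have "eval_monom Var m = Poly_Mapping.single m (1::'a)" for m
    by (simp add: eval_monom_def Var_power prod_single poly_mapping_sum_single)
  then show ?thesis
    using poly_mapping_sum_single[of "Poly_Mapping.keys p" p]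
    by (simp add: subst_def eval_monom_def[symmetric] Const_def mult_single)
qed

lemma subst_subst: "subst t (subst s p) = subst (\<lambda>k. subst t (s k)) p"
  by (simp add: subst_def[of s p] subst_def[of "\<lambda>k. subst t (s k)" p] subst.hom_sum
      subst.hom_mult subst.hom_prod subst.hom_power)

lemma dvd_diff_mult:
  fixes d :: "'b::comm_ring_1"
  assumes "d dvd a - b" "d dvd c - e"
  shows "d dvd a * c - b * e"
proof -
  have "a * c - b * e = (a - b) * c + b * (c - e)"
    by (simp add: algebra_simps)
  then show ?thesis
    using assms by simp
qed

lemma dvd_diff_power:
  fixes d :: "'b::comm_ring_1"
  assumes "d dvd a - b"
  shows "d dvd a ^ n - b ^ n"
  using assms by (induction n) (simp_all add: dvd_diff_mult)

lemma dvd_diff_prod: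
  fixes d :: "'b::comm_ring_1"
  assumes "\<And>x. x \<in> A \<Longrightarrow> d dvd f x - g x"
  shows "d dvd prod f A - prod g A"
  using assms by (induction A rule: infinite_finite_induct) (simp_all add: dvd_diff_mult)

lemma dvd_diff_sum:
  fixes d :: "'b::comm_ring_1"
  assumes "\<And>x. x \<in> A \<Longrightarrow> d dvd f x - g x"
  shows "d dvd sum f A - sum g A"
  using assms by (simp add: dvd_sum flip: sum_subtractf)

lemma dvd_subst_diff:
  assumes "\<And>k. d dvd s k - t k"
  shows "d dvd subst s p - subst t p"
  unfolding subst_def
  by (intro dvd_diff_sum dvd_diff_mult dvd_diff_prod dvd_diff_power assms) simp

lemma Var_minus_dvd_if_subst_eq_0:
  assumes "subst (Var(i := v)) p = 0"
  shows "Var i - v dvd p"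
  using dvd_subst_diff[of "Var i - v" Var "Var(i := v)" p] assms by simp

lemma prod_Var_minus_dvd:
  fixes h :: "'a::idom mpoly"
  assumes "finite S"
    and "\<And>w u. w \<in> S \<Longrightarrow> subst (Var(i := u)) w = w"
    and "\<And>w. w \<in> S \<Longrightarrow> subst (Var(i := w)) h = 0"
  shows "(\<Prod>w\<in>S. Var i - w) dvd h"
  using assms
proof (induction S rule: finite_induct)
  case (insert w0 S)
  then obtain k where h: "h = (\<Prod>w\<in>S. Var i - w) * k"
    by (auto elim: dvdE)
  have "0 = subst (Var(i := w0)) h"
    using insert.prems(2)[of w0] by (simp add: fun_upd_def)
  also have "\<dots> = (\<Prod>w\<in>S. w0 - w) * subst (Var(i := w0)) k"
    using insert.prems(1) by (simp add: h subst.hom_mult subst.hom_prod subst.hom_minus fun_upd_def)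
  finally have "subst (Var(i := w0)) k = 0"
    using insert.hyps by (auto simp: prod_zero_iff)
  then have "Var i - w0 dvd k"
    by (rule Var_minus_dvd_if_subst_eq_0)
  then show ?case
    using insert.hyps h by (simp add: mult.commute mult_dvd_mono)
qed simp

section \<open>Frobenius over a finite field\<close>

lemma finite_field_card_ge_2: "CARD('a::{finite,field}) \<ge> 2"
proof -
  have "card {0::'a, 1} \<le> CARD('a)"
    by (rule card_mono) auto
  then show ?thesis
    by simp
qed

text \<open>The library's \<open>finite_field_power_card_eq_same\<close> is stated for the class
  \<open>finite_field\<close>, which a type variable of sort \<open>{finite,field}\<close> does not instantiate.\<close>
lemma finite_field_power_card:
  fixes x :: "'a::{finite,field}"
  shows "x ^ CARD('a) = x"
proof (cases "x = 0")
  case False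
  let ?U = "UNIV - {0::'a}"
  have "x ^ card ?U * \<Prod>?U = (\<Prod>y\<in>?U. x * y)"
    by (simp only: prod.distrib prod_constant)
  also have "\<dots> = \<Prod>?U"
    by (rule prod.reindex_bij_witness[of _ "\<lambda>y. y / x" "\<lambda>y. x * y"]) (use False in auto)
  finally have "x ^ card ?U * \<Prod>?U = \<Prod>?U" .
  moreover have "\<Prod>?U \<noteq> 0"
    by (subst prod_zero_iff) auto
  ultimately have "x ^ card ?U = 1"
    by (metis mult_cancel_right2)
  moreover have "CARD('a) = Suc (card ?U)"
    using finite_field_card_ge_2[where 'a = 'a] by (simp add: card_Diff_singleton)
  ultimately show ?thesis
    by (metis power_Suc mult_1_right)
qed (use finite_field_card_ge_2[where 'a = 'a] in simp)

lemma finite_field_power_card_power: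
  fixes x :: "'a::{finite,field}"
  shows "x ^ (CARD('a) ^ n) = x"
proof (induction n)
  case (Suc n)
  have "x ^ (CARD('a) ^ Suc n) = (x ^ CARD('a)) ^ (CARD('a) ^ n)"
    by (simp only: power_Suc power_mult)
  then show ?case
    by (simp only: finite_field_power_card Suc.IH)
qed simp

text \<open>The polynomial \<open>(X + 1)^q - X^q - 1\<close> has degree less than \<open>q\<close> but vanishes on all
  \<open>q\<close> elements of the field, so it is zero.\<close>
lemma finite_field_card_choose_eq_0:
  assumes "0 < k" "k < CARD('a::{finite,field})"
  shows "of_nat (CARD('a) choose k) = (0::'a)"
proof -
  let ?q = "CARD('a)"
  define D :: "'a poly" where "D = [:1, 1:] ^ ?q - monom 1 ?q - 1"
  have "D = 0"
  proof (rule ccontr)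
    assume "D \<noteq> 0"
    then have "card {x. poly D x = 0} \<le> degree D"
      by (rule card_poly_roots_bound)
    moreover have "{x. poly D x = 0} = UNIV"
      by (simp add: D_def poly_monom finite_field_power_card)
    moreover have "degree D \<le> ?q"
      unfolding D_def
      by (intro degree_diff_le order.trans[OF degree_power_le]) (auto simp: degree_monom_le)
    moreover have "coeff D ?q = 0"
      using finite_field_card_ge_2[where 'a = 'a]
      by (simp add: D_def coeff_linear_poly_power coeff_monom)
    ultimately show False
      using \<open>D \<noteq> 0\<close> by (metis le_antisym leading_coeff_0_iff)
  qed
  then have "coeff D k = 0"
    by simp
  then show ?thesis
    using assms by (simp add: D_def coeff_linear_poly_power coeff_monom coeff_1)
qed

lemma mpoly_frobenius_add:
  fixes u v :: "'a::{finite,field} mpoly"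
  shows "(u + v) ^ CARD('a) = u ^ CARD('a) + v ^ CARD('a)"
proof -
  let ?q = "CARD('a)"
  have "(u + v) ^ ?q = (\<Sum>k\<le>?q. of_nat (?q choose k) * u ^ k * v ^ (?q - k))"
    by (rule binomial_ring)
  also have "\<dots> = (\<Sum>k\<in>{0, ?q}. of_nat (?q choose k) * u ^ k * v ^ (?q - k))"
  proof (intro sum.mono_neutral_right ballI)
    fix k assume "k \<in> {..?q} - {0, ?q}"
    have "of_nat (?q choose k) = Const (of_nat (?q choose k) :: 'a)"
      by (simp add: Const_def)
    also have "\<dots> = 0"
      using \<open>k \<in> {..?q} - {0, ?q}\<close> by (simp add: finite_field_card_choose_eq_0)
    finally show "of_nat (?q choose k) * u ^ k * v ^ (?q - k) = 0"
      by simp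
  qed auto
  finally show ?thesis
    using finite_field_card_ge_2[where 'a = 'a] by (simp add: add.commute)
qed

lemma mpoly_frobenius_power_add:
  fixes u v :: "'a::{finite,field} mpoly"
  shows "(u + v) ^ (CARD('a) ^ n) = u ^ (CARD('a) ^ n) + v ^ (CARD('a) ^ n)"
proof (induction n)
  case (Suc n)
  have "(u + v) ^ (CARD('a) ^ Suc n) = ((u + v) ^ (CARD('a) ^ n)) ^ CARD('a)"
    by (simp only: power_Suc2 power_mult)
  also have "\<dots> = (u ^ (CARD('a) ^ n)) ^ CARD('a) + (v ^ (CARD('a) ^ n)) ^ CARD('a)"
    by (simp only: Suc.IH mpoly_frobenius_add)
  finally show ?case
    by (simp only: power_Suc2 power_mult)
qed simp

lemma mpoly_frobenius_lin_comb:
  fixes u :: "'b \<Rightarrow> 'a::{finite,field} mpoly"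
  shows "(\<Sum>j\<in>A. Const (c j) * u j) ^ (CARD('a) ^ n) = (\<Sum>j\<in>A. Const (c j) * u j ^ (CARD('a) ^ n))"
proof (induction A rule: infinite_finite_induct)
  case (insert j A)
  have "(Const (c j) * u j) ^ (CARD('a) ^ n) = Const (c j ^ (CARD('a) ^ n)) * u j ^ (CARD('a) ^ n)"
    by (simp only: power_mult_distrib Const.hom_power)
  then show ?case
    using insert.hyps by (simp add: mpoly_frobenius_power_add finite_field_power_card_power insert.IH)
qed simp_all

section \<open>Determinants\<close>

lemma sum_col_mult_cofactor_other_col:
  fixes A :: "'b::comm_ring_1 mat"
  assumes A: "A \<in> carrier_mat n n" and "i < n" "j < n" "j \<noteq> i"
  shows "(\<Sum>r<n. A $$ (r, j) * cofactor A r i) = 0"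
proof -
  have "(adj_mat A * A) $$ (i, j) = 0"
    using adj_mat(3)[OF A] assms by simp
  then show ?thesis
    using assms by (simp add: adj_mat_def times_mat_def scalar_prod_def mult.commute atLeast0LessThan)
qed

lemma det_col_linear_combination:
  fixes A :: "'b::comm_ring_1 mat"
  assumes A: "A \<in> carrier_mat n n" and i: "i < n" and J: "J \<subseteq> {..<n}" "i \<notin> J"
    and col_i: "\<And>r. r < n \<Longrightarrow> A $$ (r, i) = (\<Sum>j\<in>J. c j * A $$ (r, j)) + v r"
  shows "det A = (\<Sum>r<n. v r * cofactor A r i)"
proof -
  have "det A = (\<Sum>r<n. A $$ (r, i) * cofactor A r i)"
    by (rule laplace_expansion_column[OF A i])
  also have "\<dots> = (\<Sum>j\<in>J. c j * (\<Sum>r<n. A $$ (r, j) * cofactor A r i)) + (\<Sum>r<n. v r * cofactor A r i)"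
    by (simp add: col_i distrib_right sum.distrib sum_distrib_left sum_distrib_right sum.swap[of _ J] mult.assoc)
  also have "(\<Sum>j\<in>J. c j * (\<Sum>r<n. A $$ (r, j) * cofactor A r i)) = 0"
  proof (intro sum.neutral ballI)
    fix j assume "j \<in> J"
    with J have "j < n" "j \<noteq> i"
      by auto
    then show "c j * (\<Sum>r<n. A $$ (r, j) * cofactor A r i) = 0"
      by (simp add: sum_col_mult_cofactor_other_col[OF A i])
  qed
  finally show ?thesis
    by simp
qed

lemma cofactor_cong_except_col:
  assumes "A \<in> carrier_mat n n" "B \<in> carrier_mat n n"
    and "\<And>r k. r < n \<Longrightarrow> k < n \<Longrightarrow> k \<noteq> j \<Longrightarrow> A $$ (r, k) = B $$ (r, k)"
  shows "cofactor A i j = cofactor B i j"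
proof -
  have "mat_delete A i j = mat_delete B i j"
    unfolding mat_delete_def using assms by (intro eq_matI) auto
  then show ?thesis
    by (simp add: cofactor_def)
qed

lemma (in comm_ring_hom) hom_cofactor:
  assumes "A \<in> carrier_mat n n" "i < n" "j < n"
  shows "cofactor (map_mat hom A) i j = hom (cofactor A i j)"
proof -
  have "mat_delete (map_mat hom A) i j = map_mat hom (mat_delete A i j)"
    using assms unfolding mat_delete_def by (intro eq_matI) auto
  then show ?thesis
    by (simp add: cofactor_def hom_mult hom_power hom_uminus)
qed

section \<open>The Moore determinant\<close>

definition lin_comb :: "(nat \<Rightarrow> 'a::comm_ring_1) \<Rightarrow> nat \<Rightarrow> 'a mpoly" where
  "lin_comb cs i = (\<Sum>j\<in>{1..i-1}. Const (cs j) * Var j)"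

definition lin_combs :: "nat \<Rightarrow> 'a::comm_ring_1 mpoly set" where
  "lin_combs i = (\<lambda>cs. lin_comb cs i) ` ({1..i-1} \<rightarrow>\<^sub>E UNIV)"

lemma lin_comb_in_lin_combs: "lin_comb cs i \<in> lin_combs i"
  unfolding lin_combs_def
  by (rule image_eqI[of _ _ "restrict cs {1..i-1}"]) (auto simp: lin_comb_def intro!: sum.cong)

lemma lin_combsE:
  assumes "w \<in> lin_combs i"
  obtains cs where "w = lin_comb cs i"
  using assms unfolding lin_combs_def by blast

lemma lookup_lin_comb:
  "Poly_Mapping.lookup (lin_comb cs i) (Poly_Mapping.single k 1) = (if k \<in> {1..i-1} then cs k else 0)"
proof -
  have "Const (cs j) * Var j = Poly_Mapping.single (Poly_Mapping.single j 1) (cs j)" for j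
    by (simp add: Const_def Var_def mult_single)
  moreover have "Poly_Mapping.single j (1::nat) = Poly_Mapping.single k 1 \<longleftrightarrow> j = k" for j
    by (metis lookup_single_eq lookup_single_not_eq zero_neq_one)
  ultimately have "Poly_Mapping.lookup (lin_comb cs i) (Poly_Mapping.single k 1)
      = (\<Sum>j\<in>{1..i-1}. if j = k then cs j else 0)"
    unfolding lin_comb_def lookup_sum by (intro sum.cong refl) (simp only: lookup_single when_def)
  then show ?thesis
    by simp
qed

lemma finite_lin_combs: "finite (lin_combs i :: 'a::{finite,comm_ring_1} mpoly set)"
  unfolding lin_combs_def by (intro finite_imageI finite_PiE) auto

lemma card_lin_combs: "card (lin_combs i :: 'a::{finite,comm_ring_1} mpoly set) = CARD('a) ^ (i - 1)"
proof -
  have "inj_on (\<lambda>cs. lin_comb cs i :: 'a mpoly) ({1..i-1} \<rightarrow>\<^sub>E UNIV)"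
  proof (rule inj_onI, rule PiE_ext)
    fix cs cs' k
    assume "lin_comb cs i = (lin_comb cs' i :: 'a mpoly)" "k \<in> {1..i-1}"
    then show "cs k = cs' k"
      using lookup_lin_comb[of cs i k] lookup_lin_comb[of cs' i k] by simp
  qed
  then have "card (lin_combs i :: 'a mpoly set) = card ({1..i-1} \<rightarrow>\<^sub>E (UNIV :: 'a set))"
    unfolding lin_combs_def by (rule card_image)
  then show ?thesis
    by (simp add: card_PiE)
qed

lemma Var_neq_lin_comb: "Var i \<noteq> lin_comb cs i"
proof
  assume "Var i = lin_comb cs i"
  then have "Poly_Mapping.lookup (Var i - lin_comb cs i) (Poly_Mapping.single i 1) = 0"
    by simp
  then show False
    by (simp add: lookup_minus lookup_lin_comb[simplified] Var_def split: if_splits)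
qed

lemma subst_lin_comb: "subst s (lin_comb cs i) = (\<Sum>j\<in>{1..i-1}. Const (cs j) * s j)"
  by (simp add: lin_comb_def subst.hom_sum subst.hom_mult)

lemma subst_lin_comb_fixed:
  assumes "\<And>j. 1 \<le> j \<Longrightarrow> j < i \<Longrightarrow> s j = Var j"
  shows "subst s (lin_comb cs i) = lin_comb cs i"
proof -
  have "subst s (lin_comb cs i) = (\<Sum>j\<in>{1..i-1}. Const (cs j) * s j)"
    by (rule subst_lin_comb)
  also have "\<dots> = lin_comb cs i"
    unfolding lin_comb_def using assms by (intro sum.cong) auto
  finally show ?thesis .
qed

lemma subst_lin_combs_fixed:
  assumes "w \<in> lin_combs i"
  shows "subst (Var(i := u)) w = w"
  using assms by (elim lin_combsE) (simp add: subst_lin_comb_fixed)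

lemma lin_comb_frobenius:
  fixes cs :: "nat \<Rightarrow> 'a::{finite,field}"
  shows "lin_comb cs i ^ (CARD('a) ^ t) = (\<Sum>j<i-1. Const (cs (Suc j)) * Var (Suc j) ^ (CARD('a) ^ t))"
  unfolding lin_comb_def mpoly_frobenius_lin_comb by (simp add: sum.atLeast1_atMost_eq)

lemma prod_linear_dvd_if_roots:
  fixes p :: "'b::idom poly"
  assumes "finite S" "\<And>w. w \<in> S \<Longrightarrow> poly p w = 0"
  shows "(\<Prod>w\<in>S. [:-w, 1:]) dvd p"
  using assms
proof (induction S rule: finite_induct)
  case (insert w0 S)
  then obtain k where p: "p = (\<Prod>w\<in>S. [:-w, 1:]) * k"
    by (auto elim: dvdE)
  have "0 = poly p w0"
    using insert.prems by simp
  also have "\<dots> = (\<Prod>w\<in>S. w0 - w) * poly k w0"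
    by (simp add: p poly_prod)
  finally have "poly k w0 = 0"
    using insert.hyps by (auto simp: prod_zero_iff)
  then have "[:-w0, 1:] * (\<Prod>w\<in>S. [:-w, 1:]) dvd k * (\<Prod>w\<in>S. [:-w, 1:])"
    by (intro mult_dvd_mono) (simp_all add: poly_eq_0_iff_dvd)
  then show ?case
    using insert.hyps by (simp add: p mult.commute)
qed simp

lemma eq_mult_const_if_monic_dvd:
  fixes p d :: "'b::idom poly"
  assumes "lead_coeff p = 1" "p dvd d" "degree d \<le> degree p"
  shows "d = p * [:coeff d (degree p):]"
proof -
  obtain h where d: "d = p * h"
    using assms(2) ..
  have "p \<noteq> 0"
    using assms(1) by auto
  show ?thesis
  proof (cases "h = 0")
    case False
    then have "degree h = 0"
      using assms(3) \<open>p \<noteq> 0\<close> by (simp add: d degree_mult_eq)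
    then have "d = smult (coeff h 0) p"
      unfolding d by (subst degree_0_id[symmetric]) simp_all
    then show ?thesis
      using assms(1) by simp
  qed (simp add: d)
qed

text \<open>\<open>L(x\<^sub>1, \<dots>, x\<^sub>m, X)\<close> as a polynomial in the indeterminate \<open>X\<close>.\<close>
definition moore_poly :: "nat \<Rightarrow> nat \<Rightarrow> 'a::comm_ring_1 mpoly poly" where
  "moore_poly q m = det (mat (Suc m) (Suc m) (\<lambda>(t, j).
      if j = m then monom 1 (q ^ t) else [:Var (Suc j) ^ (q ^ t):]))"

lemma poly_moore_poly:
  "poly (moore_poly q m) x
    = det (mat (Suc m) (Suc m) (\<lambda>(t, j). if j = m then x ^ (q ^ t) else Var (Suc j) ^ (q ^ t)))"
proof -
  interpret eval: comm_ring_hom "\<lambda>p. poly p x"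
    by unfold_locales simp_all
  show ?thesis
    unfolding moore_poly_def eval.hom_det[symmetric]
    by (intro arg_cong[where f = det] eq_matI) (auto simp: poly_monom)
qed

lemma mooreL_Suc_eq_poly_moore_poly: "mooreL q (Suc m) = poly (moore_poly q m) (Var (Suc m))"
  unfolding poly_moore_poly mooreL_def by (intro arg_cong[where f = det] eq_matI) auto

lemma moore_poly_eq_sum:
  "moore_poly q m
    = (\<Sum>r<Suc m. monom (cofactor (mat (Suc m) (Suc m) (\<lambda>(t, j). Var (Suc j) ^ (q ^ t))) r m) (q ^ r))"
proof -
  let ?M = "mat (Suc m) (Suc m) (\<lambda>(t, j). Var (Suc j) ^ (q ^ t)) :: 'a mpoly mat"
  let ?A = "mat (Suc m) (Suc m) (\<lambda>(t, j). if j = m then monom 1 (q ^ t) else [:Var (Suc j) ^ (q ^ t):])"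
  interpret const_poly: comm_ring_hom "\<lambda>c :: 'a mpoly. [:c:]"
    by unfold_locales (simp_all add: one_pCons)
  have cofactor_A: "cofactor ?A r m = [:cofactor ?M r m:]" if "r < Suc m" for r
  proof -
    have "cofactor ?A r m = cofactor (map_mat (\<lambda>c. [:c:]) ?M) r m"
      by (rule cofactor_cong_except_col) auto
    also have "\<dots> = [:cofactor ?M r m:]"
      using that by (intro const_poly.hom_cofactor) auto
    finally show ?thesis .
  qed
  have "moore_poly q m = (\<Sum>r<Suc m. ?A $$ (r, m) * cofactor ?A r m)"
    unfolding moore_poly_def by (rule laplace_expansion_column) auto
  also have "\<dots> = (\<Sum>r<Suc m. monom (cofactor ?M r m) (q ^ r))"
    by (intro sum.cong) (simp_all add: cofactor_A mult_monom flip: monom_0)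
  finally show ?thesis .
qed

lemma cofactor_moore_mat_last:
  "cofactor (mat (Suc m) (Suc m) (\<lambda>(t, j). Var (Suc j) ^ (q ^ t))) m m = (mooreL q m :: 'a::comm_ring_1 mpoly)"
proof -
  have "mat_delete (mat (Suc m) (Suc m) (\<lambda>(t, j). Var (Suc j) ^ (q ^ t))) m m
      = (mat m m (\<lambda>(t, j). Var (Suc j) ^ (q ^ t)) :: 'a mpoly mat)"
    unfolding mat_delete_def by (intro eq_matI) auto
  then show ?thesis
    by (simp add: cofactor_def mooreL_def flip: mult_2)
qed

lemma degree_moore_poly:
  assumes "2 \<le> q"
  shows "degree (moore_poly q m) \<le> q ^ m"
  unfolding moore_poly_eq_sum
proof (rule degree_sum_le)
  fix r assume "r \<in> {..<Suc m}"
  then have "q ^ r \<le> q ^ m"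
    using assms by (intro power_increasing) auto
  then show "degree (monom (cofactor (mat (Suc m) (Suc m) (\<lambda>(t, j). Var (Suc j) ^ (q ^ t))) r m) (q ^ r)) \<le> q ^ m"
    using degree_monom_le order.trans by blast
qed simp

lemma coeff_moore_poly_top:
  assumes "2 \<le> q"
  shows "coeff (moore_poly q m) (q ^ m) = mooreL q m"
proof -
  have "q ^ r = q ^ m \<longleftrightarrow> r = m" for r
    using assms by (simp add: power_inject_exp)
  then show ?thesis
    by (simp add: moore_poly_eq_sum coeff_sum coeff_monom cofactor_moore_mat_last)
qed

text \<open>Each \<open>w\<close> in the span is a root because \<open>w ^ q ^ t\<close> is the same \<open>\<bbbF>\<^sub>q\<close>-linear
  combination of the columns \<open>x\<^sub>j ^ q ^ t\<close>.\<close>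
lemma poly_moore_poly_lin_combs:
  assumes "w \<in> lin_combs (Suc m)"
  shows "poly (moore_poly CARD('a) m) w = (0 :: 'a::{finite,field} mpoly)"
proof -
  obtain cs where w: "w = lin_comb cs (Suc m)"
    using assms by (rule lin_combsE)
  let ?A = "mat (Suc m) (Suc m) (\<lambda>(t, j). if j = m then w ^ (CARD('a) ^ t) else Var (Suc j) ^ (CARD('a) ^ t))"
  have "det ?A = (\<Sum>r<Suc m. 0 * cofactor ?A r m)"
    by (rule det_col_linear_combination[where J = "{..<m}" and c = "\<lambda>j. Const (cs (Suc j))"])
      (auto simp: w lin_comb_frobenius)
  then show ?thesis
    by (simp add: poly_moore_poly)
qed

lemma mooreL_Suc:
  "mooreL CARD('a) (Suc m) = mooreL CARD('a) m * (\<Prod>w\<in>lin_combs (Suc m). Var (Suc m) - (w :: 'a::{finite,field} mpoly))"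
proof -
  let ?P = "\<Prod>w\<in>lin_combs (Suc m). [:-w, 1 :: 'a mpoly:]"
  have q: "2 \<le> CARD('a)"
    by (rule finite_field_card_ge_2)
  have "lead_coeff ?P = 1"
    by (simp add: lead_coeff_prod)
  moreover have "degree ?P = CARD('a) ^ m"
    by (subst degree_prod_sum_eq) (simp_all add: finite_lin_combs card_lin_combs)
  moreover have "?P dvd moore_poly CARD('a) m"
    by (intro prod_linear_dvd_if_roots finite_lin_combs poly_moore_poly_lin_combs)
  ultimately have "moore_poly CARD('a) m = ?P * [:mooreL CARD('a) m:]"
    using eq_mult_const_if_monic_dvd[of ?P "moore_poly CARD('a) m"]
    by (simp add: degree_moore_poly[OF q] coeff_moore_poly_top[OF q])
  then show ?thesis
    by (simp add: mooreL_Suc_eq_poly_moore_poly poly_prod mult.commute)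
qed

lemma mooreL_neq_0: "mooreL CARD('a) n \<noteq> (0 :: 'a::{finite,field} mpoly)"
proof (induction n)
  case 0
  then show ?case
    by (simp add: mooreL_def det_def)
next
  case (Suc n)
  have "Var (Suc n) - w \<noteq> (0 :: 'a mpoly)" if "w \<in> lin_combs (Suc n)" for w
    using that by (elim lin_combsE) (simp add: Var_neq_lin_comb)
  then show ?case
    using Suc.IH by (simp add: mooreL_Suc finite_lin_combs)
qed

lemma subst_mooreL_fixed:
  assumes "\<And>j. 1 \<le> j \<Longrightarrow> j \<le> n \<Longrightarrow> s j = Var j"
  shows "subst s (mooreL q n) = mooreL q n"
  unfolding mooreL_def subst.hom_det[symmetric]
  using assms by (intro arg_cong[where f = det] eq_matI) (auto simp: subst.hom_power)

section \<open>The numerator under substitution of a linear combination\<close>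

definition omit_insert :: "nat \<Rightarrow> nat \<Rightarrow> 'a::comm_ring_1 mpoly \<Rightarrow> nat \<Rightarrow> 'a mpoly" where
  "omit_insert i a y k = (if k < i then Var k else if k + 1 = a then y else Var (k + 1))"

lemma subst_omit: "subst s (omit i f) = subst (\<lambda>k. if k < i then s k else s (k + 1)) f"
  unfolding omit_def subst_subst by (intro arg_cong[where f = "\<lambda>s. subst s f"] ext) simp

lemma subst_upd_omit_self: "subst (Var(i := v)) (omit i f) = omit i f"
  unfolding subst_omit unfolding omit_def by (intro arg_cong[where f = "\<lambda>s. subst s f"] ext) simp

lemma subst_upd_omit_below:
  assumes "j < i"
  shows "subst (Var(i := v)) (omit j f) = subst (omit_insert j i v) f"
  unfolding subst_omit unfolding omit_insert_def using assms
  by (intro arg_cong[where f = "\<lambda>s. subst s f"] ext) auto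

definition delta_mat :: "nat \<Rightarrow> nat \<Rightarrow> nat \<Rightarrow> 'a::comm_ring_1 mpoly \<Rightarrow> 'a mpoly mat" where
  "delta_mat q a b f = mat a a (\<lambda>(t, j).
      if t + 1 < a then Var (j + 1) ^ (q ^ t) else Var (j + 1) ^ (q ^ b) * omit (j + 1) f)"

lemma deltaN_eq_det_delta_mat: "deltaN q a b f = det (delta_mat q a b f)"
  by (simp add: deltaN_def delta_mat_def)

text \<open>The right-hand side minus the left-hand side of the identity of the theorem, with \<open>a\<close>
  replaced by \<open>i\<close>.\<close>
definition delta_defect :: "nat \<Rightarrow> nat \<Rightarrow> 'a::{finite,field} mpoly \<Rightarrow> (nat \<Rightarrow> 'a) \<Rightarrow> 'a mpoly" where
  "delta_defect b i f cs =
    (\<Sum>j\<in>{1..i-1}. Const (cs j) * Var j ^ (CARD('a) ^ b)) * omit i f -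
    (\<Sum>j\<in>{1..i-1}. Const (cs j) * Var j ^ (CARD('a) ^ b) * subst (omit_insert j i (lin_comb cs i)) f)"

lemma subst_deltaN_lin_comb:
  fixes f :: "'a::{finite,field} mpoly" and cs :: "nat \<Rightarrow> 'a"
  assumes i: "1 \<le> i" "i \<le> a"
  defines "\<sigma> \<equiv> subst (Var(i := lin_comb cs i))"
  shows "\<sigma> (deltaN CARD('a) a b f)
    = delta_defect b i f cs * cofactor (map_mat \<sigma> (delta_mat CARD('a) a b f)) (a - 1) (i - 1)"
proof -
  let ?q = "CARD('a)" and ?A = "map_mat \<sigma> (delta_mat CARD('a) a b f)"
  let ?v = "\<lambda>r. if r = a - 1 then delta_defect b i f cs else 0"
  have A: "?A \<in> carrier_mat a a"
    by (simp add: delta_mat_def)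
  have \<sigma>_Var: "\<sigma> (Var k) = (if k = i then lin_comb cs i else Var k)" for k
    by (simp add: \<sigma>_def)
  have entry: "?A $$ (r, j) = (if r + 1 < a then \<sigma> (Var (j + 1)) ^ (?q ^ r)
      else \<sigma> (Var (j + 1)) ^ (?q ^ b) * \<sigma> (omit (j + 1) f))" if "r < a" "j < a" for r j
    using that by (simp add: delta_mat_def \<sigma>_def subst.hom_power subst.hom_mult)
  have last_row: "(\<Sum>j<i-1. Const (cs (Suc j)) * Var (Suc j) ^ (?q ^ b)) * omit i f
      = (\<Sum>j<i-1. Const (cs (Suc j)) * (Var (Suc j) ^ (?q ^ b) * \<sigma> (omit (Suc j) f)))
        + delta_defect b i f cs"
    by (simp add: delta_defect_def sum.atLeast1_atMost_eq \<sigma>_def subst_upd_omit_below mult.assoc)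
  have "det ?A = (\<Sum>r<a. ?v r * cofactor ?A r (i - 1))"
  proof (rule det_col_linear_combination[OF A, where J = "{..<i-1}" and c = "\<lambda>j. Const (cs (Suc j))"])
    fix r assume r: "r < a"
    have "(\<Sum>j\<in>{..<i-1}. Const (cs (Suc j)) * ?A $$ (r, j))
        = (\<Sum>j<i-1. Const (cs (Suc j)) * (if r + 1 < a then Var (Suc j) ^ (?q ^ r)
            else Var (Suc j) ^ (?q ^ b) * \<sigma> (omit (Suc j) f)))"
      using r i by (intro sum.cong) (auto simp: entry \<sigma>_Var)
    moreover have "?A $$ (r, i - 1) = (if r + 1 < a then lin_comb cs i ^ (?q ^ r)
        else lin_comb cs i ^ (?q ^ b) * omit i f)"
      using r i by (simp add: entry \<sigma>_Var) (simp add: \<sigma>_def subst_upd_omit_self)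
    ultimately show "?A $$ (r, i - 1) = (\<Sum>j\<in>{..<i-1}. Const (cs (Suc j)) * ?A $$ (r, j)) + ?v r"
      using r last_row by (auto simp: lin_comb_frobenius)
  qed (use i in auto)
  also have "\<dots> = delta_defect b i f cs * cofactor ?A (a - 1) (i - 1)"
    using i by (simp add: sum.delta if_distrib[where f = "\<lambda>x. x * _"] cong: if_cong)
  finally show ?thesis
    by (simp add: \<sigma>_def deltaN_eq_det_delta_mat)
qed

lemma cofactor_delta_mat_last:
  assumes "1 \<le> a" and s: "\<And>j. 1 \<le> j \<Longrightarrow> j < a \<Longrightarrow> s j = Var j"
  shows "cofactor (map_mat (subst s) (delta_mat q a b f)) (a - 1) (a - 1) = mooreL q (a - 1)"
proof -
  have "mat_delete (map_mat (subst s) (delta_mat q a b f)) (a - 1) (a - 1)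
      = mat (a - 1) (a - 1) (\<lambda>(t, j). Var (j + 1) ^ (q ^ t))"
    unfolding mat_delete_def delta_mat_def using assms
    by (intro eq_matI) (auto simp: subst.hom_power)
  then show ?thesis
    by (simp add: cofactor_def mooreL_def flip: mult_2)
qed

definition cycle_perm :: "nat \<Rightarrow> nat \<Rightarrow> nat \<Rightarrow> nat" where
  "cycle_perm m a k = (if k < m then k else if k + 1 = a then m else if k < a then k + 1 else k)"

text \<open>For the unit vector \<open>cs = e\<^sub>m\<close> the identity says
  \<open>f(x\<^sub>1, \<dots>, x\<^sub>m\<^sub>-\<^sub>1, x\<^sub>m\<^sub>+\<^sub>1, \<dots>, x\<^sub>a\<^sub>-\<^sub>1, x\<^sub>m, \<dots>) = f(x\<^sub>1, \<dots>, x\<^sub>a\<^sub>-\<^sub>1, \<dots>)\<close>,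
  i.e. that \<open>f\<close> is invariant under the cycle.\<close>
lemma subst_cycle_perm_if_delta_defects_eq_0:
  fixes f :: "'a::{finite,field} mpoly"
  assumes defect: "\<And>cs. delta_defect b a f cs = 0" and m: "1 \<le> m" "m < a"
  shows "subst (\<lambda>k. u (cycle_perm m a k)) f = subst u f"
proof -
  let ?e = "\<lambda>j. if j = m then 1 else (0::'a)"
  have sum_e: "(\<Sum>j\<in>{1..a-1}. Const (?e j) * g j) = g m" for g :: "nat \<Rightarrow> 'a mpoly"
  proof -
    have "(\<Sum>j\<in>{1..a-1}. Const (?e j) * g j) = (\<Sum>j\<in>{1..a-1}. if j = m then g j else 0)"
      by (intro sum.cong) simp_all
    then show ?thesis
      using m by simp
  qed
  have "delta_defect b a f ?e
      = Var m ^ (CARD('a) ^ b) * omit a f - Var m ^ (CARD('a) ^ b) * subst (omit_insert m a (Var m)) f"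
    unfolding delta_defect_def lin_comb_def mult.assoc sum_e ..
  then have swap: "subst (omit_insert m a (Var m)) f = omit a f"
    using defect[of ?e] by simp
  let ?\<theta> = "\<lambda>k. if k < a then u k else u (k - 1)"
  have "subst u f = subst ?\<theta> (omit a f)"
    unfolding subst_omit by (intro arg_cong[where f = "\<lambda>s. subst s f"] ext) simp
  also have "\<dots> = subst ?\<theta> (subst (omit_insert m a (Var m)) f)"
    by (simp only: swap)
  also have "\<dots> = subst (\<lambda>k. u (cycle_perm m a k)) f"
    unfolding subst_subst omit_insert_def cycle_perm_def
    using m by (intro arg_cong[where f = "\<lambda>s. subst s f"] ext) auto
  finally show ?thesis ..
qed

lemma delta_defect_restrict:
  fixes f :: "'a::{finite,field} mpoly" and cs :: "nat \<Rightarrow> 'a"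
  assumes "i \<le> a"
  shows "delta_defect b a f (\<lambda>j. if j < i then cs j else 0)
    = (\<Sum>j\<in>{1..i-1}. Const (cs j) * Var j ^ (CARD('a) ^ b)) * omit a f
      - (\<Sum>j\<in>{1..i-1}. Const (cs j) * (Var j ^ (CARD('a) ^ b) * subst (omit_insert j a (lin_comb cs i)) f))"
proof -
  have restrict: "(\<Sum>j\<in>{1..a-1}. Const (if j < i then cs j else 0) * g j) = (\<Sum>j\<in>{1..i-1}. Const (cs j) * g j)"
    for g :: "nat \<Rightarrow> 'a mpoly"
    using assms by (intro sum.mono_neutral_cong_right) auto
  show ?thesis
    unfolding delta_defect_def lin_comb_def mult.assoc restrict ..
qed

lemma subst_shift_omit_insert:
  fixes f :: "'a::{finite,field} mpoly"
  assumes defect: "\<And>cs. delta_defect b a f cs = 0" and "1 \<le> j" "j < i" "i \<le> a"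
  defines "s \<equiv> \<lambda>k. if k < i then Var k else if k < a then Var (k + 1) else Var k"
  assumes v: "subst s v = v"
  shows "subst s (subst (omit_insert j a v) f) = subst (omit_insert j i v) f"
proof -
  have "subst s (subst (omit_insert j a v) f) = subst (\<lambda>k. omit_insert j i v (cycle_perm (i - 1) a k)) f"
    unfolding subst_subst omit_insert_def cycle_perm_def
    using assms by (intro arg_cong[where f = "\<lambda>s. subst s f"] ext) (auto simp: s_def)
  also have "\<dots> = subst (omit_insert j i v) f"
    by (rule subst_cycle_perm_if_delta_defects_eq_0[OF defect]) (use assms in auto)
  finally show ?thesis .
qed

text \<open>Substituting \<open>x\<^sub>k \<mapsto> x\<^sub>k\<^sub>+\<^sub>1\<close> for \<open>i \<le> k < a\<close> into the identity for the
  coefficients \<open>cs\<close> truncated below \<open>i\<close> gives the identity at \<open>i\<close>.\<close>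
lemma delta_defect_eq_0_below:
  fixes f :: "'a::{finite,field} mpoly"
  assumes defect: "\<And>cs. delta_defect b a f cs = 0" and i: "1 \<le> i" "i \<le> a"
  shows "delta_defect b i f cs = 0"
proof -
  let ?Q = "CARD('a) ^ b" and ?v = "lin_comb cs i"
  define s where "s = (\<lambda>k. if k < i then Var k else if k < a then Var (k + 1) else (Var k :: 'a mpoly))"
  have s_Var: "s j = Var j" if "j \<in> {1..i-1}" for j
    using that by (auto simp: s_def)
  have "(\<Sum>j\<in>{1..i-1}. Const (cs j) * Var j ^ ?Q) * omit a f
      = (\<Sum>j\<in>{1..i-1}. Const (cs j) * (Var j ^ ?Q * subst (omit_insert j a ?v) f))"
    using defect[of "\<lambda>j. if j < i then cs j else 0"] delta_defect_restrict[OF i(2), of b f cs] by simp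
  then have "subst s ((\<Sum>j\<in>{1..i-1}. Const (cs j) * Var j ^ ?Q) * omit a f)
      = subst s (\<Sum>j\<in>{1..i-1}. Const (cs j) * (Var j ^ ?Q * subst (omit_insert j a ?v) f))"
    by (rule arg_cong)
  moreover have "subst s ((\<Sum>j\<in>{1..i-1}. Const (cs j) * Var j ^ ?Q) * omit a f)
      = (\<Sum>j\<in>{1..i-1}. Const (cs j) * Var j ^ ?Q) * omit i f"
    unfolding subst.hom_mult subst.hom_sum subst.hom_power subst_Const
  proof (intro arg_cong2[where f = "(*)"] sum.cong)
    show "subst s (omit a f) = omit i f"
      unfolding s_def subst_omit unfolding omit_def
      using i by (intro arg_cong[where f = "\<lambda>s. subst s f"] ext) auto
  qed (auto simp: s_Var)
  moreover have "subst s (\<Sum>j\<in>{1..i-1}. Const (cs j) * (Var j ^ ?Q * subst (omit_insert j a ?v) f))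
      = (\<Sum>j\<in>{1..i-1}. Const (cs j) * (Var j ^ ?Q * subst (omit_insert j i ?v) f))"
    unfolding subst.hom_mult subst.hom_sum subst.hom_power subst_Const
  proof (intro sum.cong arg_cong2[where f = "(*)"] refl)
    fix j assume "j \<in> {1..i-1}"
    moreover have "subst s ?v = ?v"
      by (rule subst_lin_comb_fixed) (simp add: s_def)
    ultimately show "subst s (subst (omit_insert j a ?v) f) = subst (omit_insert j i ?v) f"
      using i unfolding s_def by (intro subst_shift_omit_insert[OF defect]) auto
  qed (auto simp: s_Var)
  ultimately show ?thesis
    by (simp add: delta_defect_def mult.assoc)
qed

lemma delta_defect_eq_0_if_mooreL_dvd:
  fixes f :: "'a::{finite,field} mpoly"
  assumes a: "1 \<le> a" and dvd: "mooreL CARD('a) a dvd deltaN CARD('a) a b f"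
  shows "delta_defect b a f cs = 0"
proof -
  let ?\<sigma> = "subst (Var(a := lin_comb cs a))"
  have "Var a - lin_comb cs a dvd mooreL CARD('a) a"
    using a mooreL_Suc[of "a - 1", where 'a = 'a]
    by (simp add: dvd_prodI finite_lin_combs lin_comb_in_lin_combs)
  also note dvd
  finally have "?\<sigma> (Var a - lin_comb cs a) dvd ?\<sigma> (deltaN CARD('a) a b f)"
    by (rule subst.hom_dvd)
  moreover have "?\<sigma> (Var a - lin_comb cs a) = 0"
    by (simp add: subst.hom_minus subst_lin_comb_fixed)
  ultimately have "?\<sigma> (deltaN CARD('a) a b f) = 0"
    by simp
  moreover have "cofactor (map_mat ?\<sigma> (delta_mat CARD('a) a b f)) (a - 1) (a - 1) = mooreL CARD('a) (a - 1)"
    using a by (intro cofactor_delta_mat_last) simp_all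
  ultimately have "delta_defect b a f cs * mooreL CARD('a) (a - 1) = 0"
    using subst_deltaN_lin_comb[OF a order.refl, where f = f and cs = cs and b = b] by simp
  then show ?thesis
    using mooreL_neq_0[of "a - 1", where 'a = 'a] by simp
qed

lemma mooreL_dvd_deltaN_if_delta_defect_eq_0:
  fixes f :: "'a::{finite,field} mpoly"
  assumes "\<And>cs. delta_defect b a f cs = 0"
  shows "mooreL CARD('a) a dvd deltaN CARD('a) a b f"
proof -
  have "mooreL CARD('a) i dvd deltaN CARD('a) a b f" if "i \<le> a" for i
    using that
  proof (induction i)
    case 0
    then show ?case
      by (simp add: mooreL_def det_def)
  next
    case (Suc i)
    then obtain h where h: "deltaN CARD('a) a b f = mooreL CARD('a) i * h"
      by (auto elim: dvdE)
    have "subst (Var(Suc i := w)) h = 0" if w_span: "w \<in> lin_combs (Suc i)" for w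
    proof -
      obtain cs where w: "w = lin_comb cs (Suc i)"
        using w_span by (rule lin_combsE)
      have "subst (Var(Suc i := w)) (deltaN CARD('a) a b f) = 0"
        using Suc.prems by (simp add: w subst_deltaN_lin_comb delta_defect_eq_0_below[OF assms])
      moreover have "subst (Var(Suc i := w)) (mooreL CARD('a) i) = mooreL CARD('a) i"
        by (rule subst_mooreL_fixed) simp
      ultimately show ?thesis
        using mooreL_neq_0[of i, where 'a = 'a] by (simp add: h subst.hom_mult)
    qed
    then have "(\<Prod>w\<in>lin_combs (Suc i). Var (Suc i) - w) dvd h"
      by (intro prod_Var_minus_dvd finite_lin_combs subst_lin_combs_fixed)
    then show ?case
      by (simp add: h mooreL_Suc mult_dvd_mono)
  qed
  then show ?thesis
    by simp
qed

lemma delta_defect_eq_0_iff: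
  "delta_defect b a f cs = 0 \<longleftrightarrow>
    (\<Sum>i\<in>{1..a-1}. Const (cs i) * Var i ^ (CARD('a) ^ b) * subst (omit_insert i a (lin_comb cs a)) f)
      = (\<Sum>j\<in>{1..a-1}. Const (cs j) * Var j ^ (CARD('a) ^ b)) * (omit a f :: 'a::{finite,field} mpoly)"
  unfolding delta_defect_def right_minus_eq by (rule eq_commute)

lemma mooreL_dvd_deltaN_iff_delta_defect_eq_0:
  fixes f :: "'a::{finite,field} mpoly"
  assumes "1 \<le> a"
  shows "mooreL CARD('a) a dvd deltaN CARD('a) a b f \<longleftrightarrow> (\<forall>cs. delta_defect b a f cs = 0)"
  using assms delta_defect_eq_0_if_mooreL_dvd mooreL_dvd_deltaN_if_delta_defect_eq_0 by blast

theorem mainTheorem9: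
  fixes f :: "('a::{finite,field}) mpoly" and a b c :: nat
  assumes "1 \<le> a" and "a \<le> c + 1"
    and "mvars f \<subseteq> {1..c}"
  shows "delta_is_poly (card (UNIV :: 'a set)) a b f \<longleftrightarrow>
    (\<forall>cs :: nat \<Rightarrow> 'a.
      let y = (\<Sum>j\<in>{1..a-1}. Const (cs j) * Var j) in
      (\<Sum>i\<in>{1..a-1}. Const (cs i) * Var i ^ ((card (UNIV :: 'a set)) ^ b) *
          subst (\<lambda>k. if k < i then Var k else if k + 1 = a then y else Var (k + 1)) f)
      = (\<Sum>j\<in>{1..a-1}. Const (cs j) * Var j ^ ((card (UNIV :: 'a set)) ^ b)) * omit a f)"
  unfolding delta_is_poly_def mooreL_dvd_deltaN_iff_delta_defect_eq_0[OF assms(1)] delta_defect_eq_0_iff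
  unfolding omit_insert_def lin_comb_def Let_def by (rule refl)

end
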